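(* Let $\theta=(\gamma,\mu,\sigma)\in\mathbb{R}\times\mathbb{R}\times(0,\infty)$ and $x\in\mathbb{R}$ with $1+\gamma z>0$, where $z=(x-\mu)/\sigma$, and let $u=u_\gamma(z)$. Then \[|\partial_\sigma\ell_\theta(x)|\le\begin{cases}\dfrac{z+1}{\sigma(1+\gamma z)}&\text{if }z\ge0,\\[1ex] \sigma^{-1}\big(1+u\log u\big)\,u^{\max(\gamma,0)}&\text{if }z\le0.\end{cases}\]
   Context: $u_\gamma(z)=(1+\gamma z)^{-1/\gamma}$ for $\gamma\ne0$ and $e^{-z}$ for $\gamma=0$. $\ell_\theta(x)=\log p_\theta(x)=-\log\sigma-u+(\gamma+1)\log u$ is the GEV log-density on $\{1+\gamma z>0\}$ (GEV density $p_\theta(x)=\sigma^{-1}e^{-u}u^{\gamma+1}\mathbf 1(1+\gamma z>0)$); its partial derivative in $\sigma$ is $\partial_\sigma\ell_\theta(x)=\frac{(1-u)z-1}{\sigma(1+\gamma z)}$. *)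

theory Defs
  imports "HOL-Analysis.Analysis"
begin

definition u_gev :: "real \<Rightarrow> real \<Rightarrow> real" where
  "u_gev \<gamma> z = (if \<gamma> = 0 then exp (- z) else (1 + \<gamma> * z) powr (- 1 / \<gamma>))"

definition z_gev :: "real \<Rightarrow> real \<Rightarrow> real \<Rightarrow> real" where
  "z_gev \<mu> \<sigma> x = (x - \<mu>) / \<sigma>"

definition loglik_gev :: "real \<Rightarrow> real \<Rightarrow> real \<Rightarrow> real \<Rightarrow> real" where
  "loglik_gev \<gamma> \<mu> \<sigma> x =
     (let z = z_gev \<mu> \<sigma> x; u = u_gev \<gamma> z in - ln \<sigma> - u + (\<gamma> + 1) * ln u)"

definition dsigma_loglik :: "real \<Rightarrow> real \<Rightarrow> real \<Rightarrow> real \<Rightarrow> real" where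
  "dsigma_loglik \<gamma> \<mu> \<sigma> x =
     (let z = z_gev \<mu> \<sigma> x; u = u_gev \<gamma> z in ((1 - u) * z - 1) / (\<sigma> * (1 + \<gamma> * z)))"

end

theory Submission
  imports Defs
begin

text \<open>
  Write \<open>w = 1 + \<gamma> z\<close>, so that \<open>\<partial>\<^sub>\<sigma>\<ell> = ((1 - u) z - 1) / (\<sigma> w)\<close> and \<open>u\<^sup>\<gamma> = 1 / w\<close>.
  For \<open>z \<ge> 0\<close> we have \<open>u \<le> 1\<close>, so \<open>0 \<le> (1 - u) z \<le> z\<close>.
  For \<open>z \<le> 0\<close> we have \<open>u \<ge> 1\<close>, and the elementary bounds
  \<open>1 - 1/w \<le> ln w \<le> w - 1\<close> applied to \<open>ln u = - ln w / \<gamma>\<close> give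
  \<open>-z \<le> max 1 w \<cdot> ln u\<close>; since \<open>w \<cdot> u powr max \<gamma> 0 = max 1 w\<close> when \<open>z \<le> 0\<close>, this is exactly the claimed bound.
\<close>

lemma u_gev_pos:
  assumes "1 + \<gamma> * z > 0"
  shows "u_gev \<gamma> z > 0"
  using assms by (simp add: u_gev_def)

lemma ln_u_gev:
  assumes "1 + \<gamma> * z > 0" and "\<gamma> \<noteq> 0"
  shows "ln (u_gev \<gamma> z) = - ln (1 + \<gamma> * z) / \<gamma>"
  using assms by (simp add: u_gev_def ln_powr)

lemma u_gev_powr_gamma:
  assumes "1 + \<gamma> * z > 0"
  shows "u_gev \<gamma> z powr \<gamma> = 1 / (1 + \<gamma> * z)"
proof (cases "\<gamma> = 0")
  case True
  then show ?thesis by (simp add: u_gev_def)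
next
  case False
  then have "u_gev \<gamma> z powr \<gamma> = (1 + \<gamma> * z) powr (- 1 / \<gamma> * \<gamma>)"
    by (simp add: u_gev_def powr_powr)
  also have "\<dots> = 1 / (1 + \<gamma> * z)"
    using False assms by (simp add: powr_minus_divide)
  finally show ?thesis .
qed

lemma u_gev_le_one:
  assumes "1 + \<gamma> * z > 0" and "z \<ge> 0"
  shows "u_gev \<gamma> z \<le> 1"
proof (cases "\<gamma> = 0")
  case True
  then show ?thesis using assms by (simp add: u_gev_def)
next
  case False
  have "ln (1 + \<gamma> * z) / \<gamma> \<ge> 0"
  proof (cases "\<gamma> > 0")
    case True
    then show ?thesis using assms by simp
  next
    case False
    then have "1 + \<gamma> * z \<le> 1" using assms by (simp add: mult_nonpos_nonneg)
    then show ?thesis using False assms(1) by (simp add: divide_nonpos_nonpos)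
  qed
  then have "ln (u_gev \<gamma> z) \<le> 0" using ln_u_gev[OF assms(1) False] by simp
  then show ?thesis using u_gev_pos[OF assms(1)] by simp
qed

lemma neg_z_le_ln_u_gev:
  assumes "1 + \<gamma> * z > 0" and "z \<le> 0"
  shows "- z \<le> max 1 (1 + \<gamma> * z) * ln (u_gev \<gamma> z)"
proof -
  define w where "w = 1 + \<gamma> * z"
  have w: "w > 0" using assms(1) by (simp add: w_def)
  consider "\<gamma> = 0" | "\<gamma> > 0" | "\<gamma> < 0" by linarith
  then show ?thesis
  proof cases
    case 1
    then show ?thesis by (simp add: u_gev_def)
  next
    case 2
    then have "w \<le> 1" using assms(2) by (simp add: w_def mult_nonneg_nonpos)
    have "- z = (1 - w) / \<gamma>" using 2 by (simp add: w_def)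
    also have "\<dots> \<le> - ln w / \<gamma>"
      using 2 ln_le_minus_one[OF w] divide_right_mono[of "1 - w" "- ln w" \<gamma>] by simp
    also have "\<dots> = max 1 w * ln (u_gev \<gamma> z)"
      using \<open>w \<le> 1\<close> 2 ln_u_gev[OF assms(1)] by (simp add: w_def)
    finally show ?thesis by (simp add: w_def)
  next
    case 3
    then have "w \<ge> 1" using assms(2) by (simp add: w_def mult_nonpos_nonpos)
    have "w - 1 \<le> w * ln w"
      using ln_le_minus_one[of "1 / w"] w by (simp add: ln_div field_simps)
    have "- z = (w - 1) / - \<gamma>" using 3 by (simp add: w_def)
    also have "\<dots> \<le> w * ln w / - \<gamma>"
      using 3 \<open>w - 1 \<le> w * ln w\<close> divide_right_mono[of "w - 1" "w * ln w" "- \<gamma>"] by simp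
    also have "\<dots> = max 1 w * ln (u_gev \<gamma> z)"
      using \<open>w \<ge> 1\<close> 3 ln_u_gev[OF assms(1)] by (simp add: w_def)
    finally show ?thesis by (simp add: w_def)
  qed
qed

lemma u_gev_ge_one:
  assumes "1 + \<gamma> * z > 0" and "z \<le> 0"
  shows "u_gev \<gamma> z \<ge> 1"
proof -
  have "0 \<le> max 1 (1 + \<gamma> * z) * ln (u_gev \<gamma> z)"
    using neg_z_le_ln_u_gev[OF assms] assms(2) by linarith
  then have "ln (u_gev \<gamma> z) \<ge> 0" by (simp add: zero_le_mult_iff)
  then show ?thesis using u_gev_pos[OF assms(1)] by simp
qed

lemma mult_u_gev_powr_max:
  assumes "1 + \<gamma> * z > 0" and "z \<le> 0"
  shows "(1 + \<gamma> * z) * u_gev \<gamma> z powr max \<gamma> 0 = max 1 (1 + \<gamma> * z)"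
proof (cases "\<gamma> \<ge> 0")
  case True
  then have "1 + \<gamma> * z \<le> 1" using assms(2) by (simp add: mult_nonneg_nonpos)
  then show ?thesis using True assms(1) u_gev_powr_gamma[OF assms(1)] by (simp add: max_def)
next
  case False
  then have "1 + \<gamma> * z \<ge> 1" using assms(2) by (simp add: mult_nonpos_nonpos)
  then show ?thesis using False u_gev_pos[OF assms(1)] by (simp add: max_def)
qed

lemma abs_score_numerator_le_nonneg:
  fixes u z :: real
  assumes "z \<ge> 0" and "0 \<le> u" and "u \<le> 1"
  shows "\<bar>(1 - u) * z - 1\<bar> \<le> z + 1"
proof -
  have "0 \<le> (1 - u) * z" "(1 - u) * z \<le> z"
    using assms by (auto simp: mult_left_le_one_le)
  then show ?thesis by linarith
qed

lemma abs_score_numerator_le_nonpos: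
  fixes u z M :: real
  assumes "z \<le> 0" and "u \<ge> 1" and "M \<ge> 1" and "- z \<le> M * ln u"
  shows "\<bar>(1 - u) * z - 1\<bar> \<le> (1 + u * ln u) * M"
proof -
  have ln_u: "ln u \<ge> 0" using assms(2) by simp
  have "(1 - u) * z = (u - 1) * - z" by (simp add: algebra_simps)
  also have "\<dots> \<le> (u - 1) * (M * ln u)"
    using assms by (intro mult_left_mono) auto
  also have "\<dots> \<le> u * ln u * M"
    using ln_u assms(3) by (simp add: algebra_simps)
  finally have upper: "(1 - u) * z \<le> u * ln u * M" .
  have "0 \<le> (1 - u) * z" using assms(1,2) by (simp add: mult_nonpos_nonpos)
  moreover have "0 \<le> u * ln u * M" using ln_u assms(2,3) by simp
  ultimately show ?thesis using upper assms(3) by (simp add: algebra_simps abs_le_iff)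
qed

theorem lemmaB3:
  fixes \<gamma> \<mu> \<sigma> x :: real
  assumes "\<sigma> > 0"
    and "1 + \<gamma> * z_gev \<mu> \<sigma> x > 0"
  shows "(z_gev \<mu> \<sigma> x \<ge> 0 \<longrightarrow>
            \<bar>dsigma_loglik \<gamma> \<mu> \<sigma> x\<bar>
              \<le> (z_gev \<mu> \<sigma> x + 1) / (\<sigma> * (1 + \<gamma> * z_gev \<mu> \<sigma> x)))
       \<and> (z_gev \<mu> \<sigma> x \<le> 0 \<longrightarrow>
            \<bar>dsigma_loglik \<gamma> \<mu> \<sigma> x\<bar>
              \<le> (1 / \<sigma>) * (1 + u_gev \<gamma> (z_gev \<mu> \<sigma> x) * ln (u_gev \<gamma> (z_gev \<mu> \<sigma> x)))
                 * u_gev \<gamma> (z_gev \<mu> \<sigma> x) powr (max \<gamma> 0))"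
proof -
  define z where "z = z_gev \<mu> \<sigma> x"
  define w where "w = 1 + \<gamma> * z"
  define u where "u = u_gev \<gamma> z"
  have w: "w > 0" using assms(2) by (simp add: w_def z_def)
  have \<sigma>w: "\<sigma> * w > 0" using assms(1) w by simp
  have abs_dsigma: "\<bar>dsigma_loglik \<gamma> \<mu> \<sigma> x\<bar> = \<bar>(1 - u) * z - 1\<bar> / (\<sigma> * w)"
    using \<sigma>w by (simp add: dsigma_loglik_def Let_def z_def u_def w_def abs_divide)
  show ?thesis
    unfolding abs_dsigma z_def[symmetric] u_def[symmetric] w_def[symmetric]
  proof (intro conjI impI)
    assume "z \<ge> 0"
    then have "\<bar>(1 - u) * z - 1\<bar> \<le> z + 1"
      using abs_score_numerator_le_nonneg u_gev_pos u_gev_le_one w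
      by (simp add: u_def w_def less_imp_le)
    then show "\<bar>(1 - u) * z - 1\<bar> / (\<sigma> * w) \<le> (z + 1) / (\<sigma> * w)"
      using \<sigma>w by (simp add: divide_right_mono)
  next
    assume "z \<le> 0"
    then have "\<bar>(1 - u) * z - 1\<bar> \<le> (1 + u * ln u) * max 1 w"
      using abs_score_numerator_le_nonpos u_gev_ge_one neg_z_le_ln_u_gev w
      by (simp add: u_def w_def)
    also have "\<dots> = (1 + u * ln u) * (w * u powr max \<gamma> 0)"
      using mult_u_gev_powr_max w \<open>z \<le> 0\<close> by (simp add: u_def w_def)
    finally have "\<bar>(1 - u) * z - 1\<bar> / (\<sigma> * w) \<le> (1 + u * ln u) * (w * u powr max \<gamma> 0) / (\<sigma> * w)"
      by (rule divide_right_mono) (use \<sigma>w in simp)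
    also have "\<dots> = 1 / \<sigma> * (1 + u * ln u) * u powr max \<gamma> 0"
      using w by simp
    finally show "\<bar>(1 - u) * z - 1\<bar> / (\<sigma> * w) \<le> 1 / \<sigma> * (1 + u * ln u) * u powr max \<gamma> 0" .
  qed
qed

end
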